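(* Let $P$ satisfy (P1)–(P3), let $\theta\ge0$, and let $d(s)=2+\frac{sk''(s)}{k'(s)}$. Suppose $x:[0,\infty)\to[0,\infty)$ is measurable and locally integrable and satisfies, for some $C>0$, $$x(t)\le Ct^\theta+\frac1t\int_0^td(s)x(s)\,ds\qquad\text{for all }t\ge\rho^*.$$ Then there is $\tilde C>0$ independent of $t$ such that for all $t\ge\rho^*$: $x(t)\le\tilde Ct^{\theta_2}$ if $0\le\theta<\theta_2$; $x(t)\le\tilde Ct^{\theta_2}\ln t$ if $\theta=\theta_2$; and $x(t)\le\tilde Ct^\theta$ if $\theta>\theta_2$. Moreover, if instead $x(t)\le Ct^\theta\ln t+\frac1t\int_0^td(s)x(s)ds$ for $t\ge\rho^*$ with $\theta>\theta_2$, then $x(t)\le\tilde Ct^\theta\ln t$ for $t\ge\rho^*$.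
   Context: (P1) $P\in C^1([0,\infty))\cap C^4((0,\infty))$, $P'>0$, $2P'+\rho P''>0$ for $\rho>0$. (P2) $P=\kappa_1\rho^{\gamma_1}(1+\mathcal P_1)$ on $[0,\rho_* )$, $\gamma_1\in(1,3)$, $|\mathcal P_1^{(j)}|\le C_*\rho^{\gamma_1-1-j}$, $j\le4$. (P3) $P=\kappa_2\rho^{\gamma_2}(1+\mathcal P_2)$ on $[\rho^*,\infty)$, $\rho^*>\rho_*$ (taken sufficiently large), $\gamma_2\in(\frac65,\gamma_1]$, $|\mathcal P_2^{(j)}|\le C^*\rho^{-\epsilon-j}$, $j\le4$, $\epsilon>0$. $k(\rho)=\int_0^\rho\sqrt{P'(y)}/y\,dy$, $\theta_2=\frac{\gamma_2-1}2$. *)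

theory Defs
  imports "HOL-Analysis.Analysis"
begin

definition P1 :: "(real \<Rightarrow> real) \<Rightarrow> bool" where
  "P1 P \<longleftrightarrow>
     (\<exists>P'. continuous_on {0..} P' \<and> (\<forall>r\<ge>0. (P has_real_derivative P' r) (at r within {0..}))) \<and>
     (\<forall>j<4. \<forall>r>0. (deriv ^^ j) P differentiable at r) \<and>
     continuous_on {0<..} ((deriv ^^ 4) P) \<and>
     (\<forall>r>0. deriv P r > 0) \<and>
     (\<forall>r>0. 2 * deriv P r + r * deriv (deriv P) r > 0)"

definition P2 :: "(real \<Rightarrow> real) \<Rightarrow> real \<Rightarrow> real \<Rightarrow> real \<Rightarrow> real \<Rightarrow> (real \<Rightarrow> real) \<Rightarrow> bool" where
  "P2 P rho_lo kappa1 gamma1 Clo calP1 \<longleftrightarrow>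
     0 < rho_lo \<and> 1 < gamma1 \<and> gamma1 < 3 \<and>
     (\<forall>\<rho>. 0 \<le> \<rho> \<and> \<rho> < rho_lo \<longrightarrow> P \<rho> = kappa1 * \<rho> powr gamma1 * (1 + calP1 \<rho>)) \<and>
     (\<forall>j\<le>4. \<forall>\<rho>. 0 < \<rho> \<and> \<rho> < rho_lo \<longrightarrow>
        \<bar>(deriv ^^ j) calP1 \<rho>\<bar> \<le> Clo * \<rho> powr (gamma1 - 1 - real j))"

definition P3 :: "(real \<Rightarrow> real) \<Rightarrow> real \<Rightarrow> real \<Rightarrow> real \<Rightarrow> real \<Rightarrow> (real \<Rightarrow> real) \<Rightarrow> real \<Rightarrow> real \<Rightarrow> bool" where
  "P3 P rho_hi kappa2 gamma2 Chi calP2 eps gamma1 \<longleftrightarrow>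
     6/5 < gamma2 \<and> gamma2 \<le> gamma1 \<and> 0 < eps \<and>
     (\<forall>\<rho>\<ge>rho_hi. P \<rho> = kappa2 * \<rho> powr gamma2 * (1 + calP2 \<rho>)) \<and>
     (\<forall>j\<le>4. \<forall>\<rho>>rho_hi. \<bar>(deriv ^^ j) calP2 \<rho>\<bar> \<le> Chi * \<rho> powr (- eps - real j))"

definition kfun :: "(real \<Rightarrow> real) \<Rightarrow> real \<Rightarrow> real" where
  "kfun P \<rho> = (LBINT y=0..\<rho>. sqrt (deriv P y) / y)"

definition dfun :: "(real \<Rightarrow> real) \<Rightarrow> real \<Rightarrow> real" where
  "dfun P s = 2 + s * deriv (deriv (kfun P)) s / deriv (kfun P) s"

end

theory Submission
  imports Defs
begin

text \<open>
  Since \<open>k' = \<surd>P'/s\<close>, the kernel is \<open>d = 1 + s P''/(2 P')\<close>, and the expansion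
  \<open>P = \<kappa>\<^sub>2 s^\<gamma>\<^sub>2 (1 + O(s^(-\<epsilon>)))\<close> gives \<open>d(s) \<le> 1 + \<theta>\<^sub>2 + c s^(-\<epsilon>)\<close> for large \<open>s\<close>.
  The contribution of \<open>[0, R)\<close> to the memory term is a harmless \<open>K/t\<close>, so \<open>x\<close> is a subsolution
  of \<open>x \<le> f + K/t + (1/t) \<integral>\<^sub>R\<^sup>t (1 + \<theta>\<^sub>2 + c s^(-\<epsilon>)) x ds\<close>.
  For \<open>w = t^\<theta>\<^sub>2 E(t) g(t)\<close> with \<open>E(t) = exp (-(c/\<epsilon>) t^(-\<epsilon>))\<close>, which lies between positive
  constants, \<open>(t w)' = (1 + \<theta>\<^sub>2 + c t^(-\<epsilon>)) w + t^(1 + \<theta>\<^sub>2) E g'\<close>; choosing \<open>g'\<close> of order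
  \<open>t^(\<theta> - \<theta>\<^sub>2 - 1)\<close>, \<open>1/t\<close> or \<open>t^(\<theta> - \<theta>\<^sub>2 - 1) ln t\<close> yields supersolutions of the claimed
  growth, and a maximum principle for \<open>x/w\<close> on \<open>[R, T]\<close> gives \<open>x \<le> w\<close>.
\<close>

section \<open>A comparison principle for Volterra inequalities\<close>

lemma set_integrable_continuous_mult:
  fixes D x :: "real \<Rightarrow> real"
  assumes D: "continuous_on {a..b} D" and x: "set_integrable lborel {a..b} x"
  shows "set_integrable lborel {a..b} (\<lambda>s. D s * x s)"
proof -
  obtain M where M: "\<And>s. s \<in> {a..b} \<Longrightarrow> \<bar>D s\<bar> \<le> M"
    using compact_continuous_image[OF D compact_Icc]
    by (metis bounded_iff compact_imp_bounded image_eqI real_norm_def)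
  have "(\<lambda>s. indicator {a..b} s *\<^sub>R D s) \<in> borel_measurable lborel"
    using borel_measurable_continuous_on_indicator[OF _ D] by simp
  moreover have "(\<lambda>s. indicator {a..b} s *\<^sub>R x s) \<in> borel_measurable lborel"
    using x unfolding set_integrable_def by (rule borel_measurable_integrable)
  ultimately have "(\<lambda>s. (indicator {a..b} s *\<^sub>R D s) * (indicator {a..b} s *\<^sub>R x s)) \<in> borel_measurable lborel"
    by measurable
  moreover have "(\<lambda>s. (indicator {a..b} s *\<^sub>R D s) * (indicator {a..b} s *\<^sub>R x s))
      = (\<lambda>s. indicator {a..b} s *\<^sub>R (D s * x s))"
    by (auto simp: indicator_def)
  ultimately have "set_borel_measurable lborel {a..b} (\<lambda>s. D s * x s)"
    unfolding set_borel_measurable_def by simp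
  then show ?thesis
  proof (rule set_integrable_bound[rotated])
    show "set_integrable lborel {a..b} (\<lambda>s. M * x s)" using x by simp
    show "AE s in lborel. s \<in> {a..b} \<longrightarrow> norm (D s * x s) \<le> norm (M * x s)"
      using M by (intro AE_I2) (force simp: abs_mult intro: mult_right_mono)
  qed
qed

lemma set_integral_nonneg:
  fixes g :: "'a \<Rightarrow> real"
  assumes "\<And>s. s \<in> A \<Longrightarrow> 0 \<le> g s"
  shows "0 \<le> (LINT s:A|M. g s)"
  unfolding set_lebesgue_integral_def
  using assms by (auto intro!: Bochner_Integration.integral_nonneg simp: indicator_def)

lemma set_integral_Icc_mono_upper:
  fixes g :: "real \<Rightarrow> real"
  assumes "set_integrable lborel {a..b} g" "\<And>s. s \<in> {a..b} \<Longrightarrow> 0 \<le> g s" "c \<le> b"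
  shows "(LINT s:{a..c}|lborel. g s) \<le> (LINT s:{a..b}|lborel. g s)"
proof -
  have "set_integrable lborel {a..c} g"
    by (rule set_integrable_subset[OF assms(1)]) (use assms(3) in auto)
  with assms show ?thesis
    unfolding set_lebesgue_integral_def set_integrable_def
    by (intro integral_mono) (auto simp: indicator_def)
qed

lemma volterra_subsolution_bounded:
  fixes x D f :: "real \<Rightarrow> real"
  assumes R: "0 < R" and K: "0 \<le> K" and T: "R \<le> T"
    and xnn: "\<And>t. t \<ge> R \<Longrightarrow> 0 \<le> x t"
    and Dx: "set_integrable lborel {R..T} (\<lambda>s. D s * x s)"
    and Dnn: "\<And>t. t \<ge> R \<Longrightarrow> 0 \<le> D t"
    and f: "continuous_on {R..T} f"
    and sub: "\<And>t. t \<ge> R \<Longrightarrow> x t \<le> f t + K/t + (1/t) * (LINT s:{R..t}|lborel. D s * x s)"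
  shows "\<exists>B. \<forall>s\<in>{R..T}. x s \<le> B"
proof -
  obtain sm where fm: "\<And>s. s \<in> {R..T} \<Longrightarrow> f s \<le> f sm"
    using continuous_attains_sup[OF compact_Icc _ f] T by (metis atLeastAtMost_iff empty_iff order_refl)
  define IT where "IT = (LINT u:{R..T}|lborel. D u * x u)"
  have "x s \<le> f sm + K/R + (1/R) * IT" if s: "s \<in> {R..T}" for s
  proof -
    have sR: "R \<le> s" using s by simp
    have I0: "0 \<le> (LINT u:{R..s}|lborel. D u * x u)"
      by (rule set_integral_nonneg) (use Dnn xnn in auto)
    have "(LINT u:{R..s}|lborel. D u * x u) \<le> IT"
      unfolding IT_def by (rule set_integral_Icc_mono_upper[OF Dx]) (use Dnn xnn s in auto)
    then have "(1/s) * (LINT u:{R..s}|lborel. D u * x u) \<le> (1/R) * IT"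
      using I0 sR R by (intro mult_mono) (auto simp: frac_le)
    moreover have "K/s \<le> K/R" using K sR R by (simp add: frac_le)
    ultimately show ?thesis using sub[OF sR] fm[OF s] by linarith
  qed
  then show ?thesis by blast
qed

lemma bdd_above_quotient_Icc:
  fixes x w :: "real \<Rightarrow> real"
  assumes T: "R \<le> T" and w: "continuous_on {R..T} w" and wpos: "\<And>s. s \<in> {R..T} \<Longrightarrow> 0 < w s"
    and B: "\<And>s. s \<in> {R..T} \<Longrightarrow> x s \<le> B"
  shows "bdd_above ((\<lambda>s. x s / w s) ` {R..T})"
proof -
  obtain s1 where s1: "s1 \<in> {R..T}" "\<And>s. s \<in> {R..T} \<Longrightarrow> w s1 \<le> w s"
    using continuous_attains_inf[OF compact_Icc _ w] T by (metis atLeastAtMost_iff empty_iff order_refl)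
  have "x s / w s \<le> \<bar>B\<bar> / w s1" if s: "s \<in> {R..T}" for s
  proof -
    have "x s / w s \<le> \<bar>B\<bar> / w s"
      using order_trans[OF B[OF s] abs_ge_self] wpos[OF s] by (intro divide_right_mono) auto
    also have "\<dots> \<le> \<bar>B\<bar> / w s1" using s1 wpos s by (intro divide_left_mono) auto
    finally show ?thesis .
  qed
  then show ?thesis by (rule bdd_aboveI2)
qed

lemma volterra_subsolution_improve:
  fixes x D w f :: "real \<Rightarrow> real"
  assumes R: "0 < R" and sR: "R \<le> s" and u: "0 \<le> u"
    and Dnn: "\<And>v. v \<in> {R..s} \<Longrightarrow> 0 \<le> D v"
    and Dx: "set_integrable lborel {R..s} (\<lambda>v. D v * x v)"
    and Dw: "set_integrable lborel {R..s} (\<lambda>v. D v * w v)"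
    and xu: "\<And>v. v \<in> {R..s} \<Longrightarrow> x v \<le> u * w v"
    and sub: "x s \<le> f s + K/s + (1/s) * (LINT v:{R..s}|lborel. D v * x v)"
    and super: "f s + K/s + (1/s) * (LINT v:{R..s}|lborel. D v * w v) \<le> w s"
  shows "x s \<le> u * w s - (u - 1) * (f s + K/s)"
proof -
  define J where "J = (LINT v:{R..s}|lborel. D v * w v)"
  have "(LINT v:{R..s}|lborel. D v * x v) \<le> (LINT v:{R..s}|lborel. u * (D v * w v))"
    using Dx Dw xu Dnn by (intro set_integral_mono) (auto, metis mult.left_commute mult_left_mono)
  then have "(LINT v:{R..s}|lborel. D v * x v) \<le> u * J" unfolding J_def by simp
  then have "x s \<le> f s + K/s + u * ((1/s) * J)"
    using sub R sR by (smt (verit) divide_nonneg_nonneg mult.left_commute mult_left_mono)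
  also have "\<dots> \<le> f s + K/s + u * (w s - f s - K/s)"
    using super u unfolding J_def by (intro add_left_mono mult_left_mono) auto
  also have "\<dots> = u * w s - (u - 1) * (f s + K/s)" using R sR by (simp add: field_simps)
  finally show ?thesis .
qed

text \<open>Comparison principle: \<open>u = sup (x/w)\<close> over \<open>[R, T]\<close> cannot exceed \<open>1\<close>, since otherwise
  \<open>volterra_subsolution_improve\<close> lowers it by \<open>(u - 1) \<delta>\<close> with \<open>\<delta> = min (f/w) > 0\<close>.\<close>
lemma volterra_comparison:
  fixes x D w f :: "real \<Rightarrow> real"
  assumes R: "0 < R" and K: "0 \<le> K" and T: "R \<le> T"
    and xnn: "\<And>t. t \<ge> R \<Longrightarrow> 0 \<le> x t"
    and xint: "\<And>t. t \<ge> R \<Longrightarrow> set_integrable lborel {R..t} x"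
    and D: "continuous_on {R..} D" and Dnn: "\<And>t. t \<ge> R \<Longrightarrow> 0 \<le> D t"
    and w: "continuous_on {R..} w" and wpos: "\<And>t. t \<ge> R \<Longrightarrow> 0 < w t"
    and f: "continuous_on {R..} f" and fpos: "\<And>t. t \<ge> R \<Longrightarrow> 0 < f t"
    and sub: "\<And>t. t \<ge> R \<Longrightarrow> x t \<le> f t + K/t + (1/t) * (LINT s:{R..t}|lborel. D s * x s)"
    and super: "\<And>t. t \<ge> R \<Longrightarrow> f t + K/t + (1/t) * (LINT s:{R..t}|lborel. D s * w s) \<le> w t"
  shows "x T \<le> w T"
proof -
  let ?S = "{R..T}"
  have cont: "\<And>g. continuous_on {R..} g \<Longrightarrow> continuous_on {R..s} g" for s
    by (erule continuous_on_subset) auto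
  have Dx: "set_integrable lborel {R..s} (\<lambda>v. D v * x v)" if "s \<ge> R" for s
    using set_integrable_continuous_mult[OF cont[OF D] xint[OF that]] .
  have Dw: "set_integrable lborel {R..s} (\<lambda>v. D v * w v)" for s
    using set_integrable_continuous_mult[OF cont[OF D] borel_integrable_atLeastAtMost'[OF cont[OF w]]] .
  have fw: "continuous_on ?S (\<lambda>s. f s / w s)"
    using cont[OF f] cont[OF w] wpos by (intro continuous_intros) (auto, metis less_irrefl)
  obtain s0 where s0: "s0 \<in> ?S" "\<And>s. s \<in> ?S \<Longrightarrow> f s0 / w s0 \<le> f s / w s"
    using continuous_attains_inf[OF compact_Icc _ fw] T by (metis atLeastAtMost_iff empty_iff order_refl)
  define \<delta> where "\<delta> = f s0 / w s0"
  have \<delta>: "0 < \<delta>" unfolding \<delta>_def using s0 fpos wpos by auto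
  obtain B where B: "\<And>s. s \<in> ?S \<Longrightarrow> x s \<le> B"
    using volterra_subsolution_bounded[OF R K T xnn Dx[OF T] Dnn cont[OF f] sub] by blast
  have bdd: "bdd_above ((\<lambda>s. x s / w s) ` ?S)"
    using wpos by (intro bdd_above_quotient_Icc[OF T cont[OF w] _ B]) auto
  define u where "u = (SUP s\<in>?S. x s / w s)"
  have xu: "x s \<le> u * w s" if "s \<in> ?S" for s
    using cSUP_upper2[OF bdd that order_refl] wpos that by (auto simp: u_def divide_le_eq)
  have "x R / w R \<le> u" unfolding u_def by (rule cSUP_upper2[OF bdd _ order_refl]) (use T in auto)
  then have u0: "0 \<le> u" using xnn[of R] wpos[of R] by (meson order_trans divide_nonneg_pos order_refl)
  have "u \<le> 1"
  proof (rule ccontr)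
    assume "\<not> u \<le> 1"
    have "x s / w s \<le> u - (u - 1) * \<delta>" if s: "s \<in> ?S" for s
    proof -
      have sR: "R \<le> s" and ws: "0 < w s" using s wpos by auto
      have "x s \<le> u * w s - (u - 1) * (f s + K/s)"
        by (rule volterra_subsolution_improve[where f=f and K=K, OF R sR u0 _ Dx[OF sR] Dw _ sub[OF sR] super[OF sR]])
          (use Dnn xu s in auto)
      also have "\<dots> \<le> u * w s - (u - 1) * (\<delta> * w s)"
        using s0(2)[OF s] \<open>\<not> u \<le> 1\<close> K R sR ws
        by (intro diff_left_mono mult_left_mono) (auto simp: \<delta>_def le_divide_eq add_increasing2)
      finally have "x s \<le> (u - (u - 1) * \<delta>) * w s" by (simp add: algebra_simps)
      then show ?thesis using ws by (simp add: divide_le_eq)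
    qed
    then have "u \<le> u - (u - 1) * \<delta>" unfolding u_def using T by (intro cSUP_least) auto
    then show False using \<open>\<not> u \<le> 1\<close> \<delta> by (smt (verit) mult_pos_pos)
  qed
  then show ?thesis using xu[of T] T wpos[of T] by (simp add: order_trans mult_le_cancel_right1)
qed

lemma volterra_supersolution:
  fixes w f D h f1 :: "real \<Rightarrow> real"
  assumes R: "0 < R" and t: "R \<le> t"
    and dw: "\<And>s. s \<ge> R \<Longrightarrow> ((\<lambda>s. s * w s) has_real_derivative (D s * w s + h s)) (at s)"
    and df: "\<And>s. s \<ge> R \<Longrightarrow> ((\<lambda>s. s * f s) has_real_derivative f1 s) (at s)"
    and hf: "\<And>s. s \<ge> R \<Longrightarrow> f1 s \<le> h s"
    and Dw: "continuous_on {R..} (\<lambda>s. D s * w s)"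
    and init: "K \<le> R * w R - R * f R"
  shows "f t + K/t + (1/t) * (LINT s:{R..t}|lborel. D s * w s) \<le> w t"
proof -
  define J where "J = (LINT s:{R..t}|lborel. D s * w s)"
  have "set_integrable lborel {R..t} (\<lambda>s. D s * w s)"
    by (rule borel_integrable_atLeastAtMost') (use Dw in \<open>auto elim: continuous_on_subset\<close>)
  from set_borel_integral_eq_integral[OF this] have hJ: "((\<lambda>s. D s * w s) has_integral J) {R..t}"
    unfolding J_def by (simp add: integrable_integral)
  have FTC: "\<And>F F'. (\<And>s. s \<ge> R \<Longrightarrow> (F has_real_derivative F' s) (at s)) \<Longrightarrow>
      (F' has_integral (F t - F R)) {R..t}"
    by (rule fundamental_theorem_of_calculus[OF t])
      (auto simp: has_real_derivative_iff_has_vector_derivative[symmetric] intro: has_field_derivative_at_within)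
  have "((\<lambda>s. (D s * w s + h s) - D s * w s) has_integral (t * w t - R * w R - J)) {R..t}"
    by (rule has_integral_diff[OF FTC[OF dw] hJ])
  then have "(h has_integral (t * w t - R * w R - J)) {R..t}" by simp
  with FTC[OF df] have "t * f t - R * f R \<le> t * w t - R * w R - J"
    by (rule has_integral_le) (use hf t in auto)
  then have "(1/t) * J \<le> (1/t) * (t * (w t - f t) - K)"
    using init R t by (intro mult_left_mono) (auto simp: algebra_simps)
  also have "\<dots> = w t - f t - K/t" using R t by (simp add: field_simps)
  finally show ?thesis unfolding J_def by simp
qed

section \<open>Growth bounds for subsolutions\<close>

text \<open>Integrating factor for the perturbation \<open>c s^(-\<epsilon>)\<close> of the kernel: its logarithmic
  derivative is \<open>c s^(-\<epsilon>) / s\<close>.\<close>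
definition correction_factor :: "real \<Rightarrow> real \<Rightarrow> real \<Rightarrow> real" where
  "correction_factor c \<epsilon> s = exp (-(c/\<epsilon>) * s powr (-\<epsilon>))"

lemma has_real_derivative_correction_factor:
  assumes s: "0 < s" and eps: "0 < \<epsilon>"
  shows "(correction_factor c \<epsilon> has_real_derivative
     (c * s powr (-\<epsilon>) / s) * correction_factor c \<epsilon> s) (at s)"
proof -
  have "((\<lambda>s. exp (-(c/\<epsilon>) * s powr (-\<epsilon>))) has_real_derivative
     exp (-(c/\<epsilon>) * s powr (-\<epsilon>)) * (-(c/\<epsilon>) * ((-\<epsilon>) * s powr (-\<epsilon> - 1)))) (at s)"
    by (intro DERIV_chain2[OF DERIV_exp] DERIV_cmult has_real_derivative_powr s)
  moreover have "s powr (-\<epsilon> - 1) = s powr (-\<epsilon>) / s" using s by (simp add: powr_diff)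
  ultimately show ?thesis using eps unfolding correction_factor_def[abs_def] by (simp add: field_simps)
qed

lemma correction_factor_bounds:
  assumes s: "1 \<le> s" and eps: "0 < \<epsilon>" and c: "0 \<le> c"
  shows "exp (-(c/\<epsilon>)) \<le> correction_factor c \<epsilon> s" "correction_factor c \<epsilon> s \<le> 1"
proof -
  have "1 \<le> s powr \<epsilon>" using ge_one_powr_ge_zero[of s \<epsilon>] s eps by simp
  then have p: "s powr (-\<epsilon>) \<le> 1" "0 \<le> s powr (-\<epsilon>)" using s by (auto simp: powr_minus_divide)
  have "0 \<le> c/\<epsilon>" using c eps by simp
  then show "exp (-(c/\<epsilon>)) \<le> correction_factor c \<epsilon> s" "correction_factor c \<epsilon> s \<le> 1"
    using p mult_left_le[of "s powr (-\<epsilon>)" "c/\<epsilon>"]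
    by (auto simp: correction_factor_def mult_nonneg_nonneg simp del: times_divide_eq_left)
qed

lemma has_real_derivative_weighted:
  fixes g :: "real \<Rightarrow> real"
  assumes s: "0 < s" and eps: "0 < \<epsilon>" and dg: "(g has_real_derivative g1) (at s)"
  shows "((\<lambda>s. s * (s powr a * correction_factor c \<epsilon> s * g s)) has_real_derivative
     (1 + a + c * s powr (-\<epsilon>)) * (s powr a * correction_factor c \<epsilon> s * g s)
       + s powr (1 + a) * correction_factor c \<epsilon> s * g1) (at s)"
proof -
  note d = DERIV_mult[OF DERIV_ident DERIV_mult[OF DERIV_mult[OF has_real_derivative_powr[OF s, of a]
        has_real_derivative_correction_factor[OF s eps, of c]] dg]]
  have "s powr (a - 1) = s powr a / s" "s powr (1 + a) = s powr a * s"
    using s by (simp_all add: powr_diff powr_add)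
  then show ?thesis using s by (intro DERIV_cong[OF d]) (simp add: field_simps)
qed

text \<open>Comparison with the supersolution \<open>w = t^a E g\<close>; the factor \<open>E\<close> absorbs the term
  \<open>c s^(-\<epsilon>)\<close> of the kernel, so only \<open>(s f)' \<le> s^(1 + a) E g'\<close> remains to be checked.\<close>
lemma volterra_bound_weighted:
  fixes x f g g1 f1 :: "real \<Rightarrow> real"
  assumes R: "0 < R" and eps: "0 < \<epsilon>" and c: "0 \<le> c" and a: "0 \<le> a" and K: "0 \<le> K" and T: "R \<le> T"
    and xnn: "\<And>t. t \<ge> R \<Longrightarrow> 0 \<le> x t"
    and xint: "\<And>t. t \<ge> R \<Longrightarrow> set_integrable lborel {R..t} x"
    and sub: "\<And>t. t \<ge> R \<Longrightarrow>
      x t \<le> f t + K/t + (1/t) * (LINT s:{R..t}|lborel. (1 + a + c * s powr (-\<epsilon>)) * x s)"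
    and dg: "\<And>s. s \<ge> R \<Longrightarrow> (g has_real_derivative g1 s) (at s)"
    and gpos: "\<And>s. s \<ge> R \<Longrightarrow> 0 < g s"
    and df: "\<And>s. s \<ge> R \<Longrightarrow> ((\<lambda>s. s * f s) has_real_derivative f1 s) (at s)"
    and hf: "\<And>s. s \<ge> R \<Longrightarrow> f1 s \<le> s powr (1 + a) * correction_factor c \<epsilon> s * g1 s"
    and f: "continuous_on {R..} f" and fpos: "\<And>t. t \<ge> R \<Longrightarrow> 0 < f t"
    and init: "K \<le> R * (R powr a * correction_factor c \<epsilon> R * g R) - R * f R"
  shows "x T \<le> T powr a * correction_factor c \<epsilon> T * g T"
proof -
  define w where "w = (\<lambda>s. s powr a * correction_factor c \<epsilon> s * g s)"
  define D where "D = (\<lambda>s::real. 1 + a + c * s powr (-\<epsilon>))"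
  have "continuous_on {R..} g"
    by (rule continuous_at_imp_continuous_on) (use dg DERIV_isCont in auto)
  moreover have "continuous_on {R..} (correction_factor c \<epsilon>)"
    by (rule continuous_at_imp_continuous_on)
      (use R has_real_derivative_correction_factor[OF _ eps, THEN DERIV_isCont] in force)
  ultimately have wc: "continuous_on {R..} w" and Dc: "continuous_on {R..} D"
    unfolding w_def D_def using R by (auto intro!: continuous_intros)
  have "x T \<le> w T"
  proof (rule volterra_comparison[OF R K T xnn xint Dc _ wc _ f fpos])
    show "0 \<le> D t" for t unfolding D_def using a c by simp
    show "0 < w t" if "t \<ge> R" for t
      unfolding w_def correction_factor_def using gpos[OF that] R that by simp
    show "x t \<le> f t + K/t + (1/t) * (LINT s:{R..t}|lborel. D s * x s)" if "t \<ge> R" for t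
      using sub[OF that] unfolding D_def .
    show "f t + K/t + (1/t) * (LINT s:{R..t}|lborel. D s * w s) \<le> w t" if "t \<ge> R" for t
    proof (rule volterra_supersolution[OF R that _ df])
      show "((\<lambda>s. s * w s) has_real_derivative D s * w s + s powr (1 + a) * correction_factor c \<epsilon> s * g1 s) (at s)"
        if "s \<ge> R" for s
        unfolding w_def D_def using has_real_derivative_weighted[OF _ eps dg[OF that]] R that by simp
      show "continuous_on {R..} (\<lambda>s. D s * w s)" using Dc wc by (intro continuous_intros)
    qed (use hf init in \<open>auto simp: w_def\<close>)
  qed
  then show ?thesis unfolding w_def .
qed

text \<open>With \<open>g = A + g\<^sub>0\<close> for a large constant \<open>A\<close> the initial condition holds automatically, and
  the bounds on \<open>E\<close> remove it from the statement.\<close>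
lemma volterra_bound_powr_weight:
  fixes x f g0 g01 f1 :: "real \<Rightarrow> real"
  assumes R: "1 \<le> R" and eps: "0 < \<epsilon>" and c: "0 \<le> c" and a: "0 \<le> a" and K: "0 \<le> K"
    and xnn: "\<And>t. t \<ge> R \<Longrightarrow> 0 \<le> x t"
    and xint: "\<And>t. t \<ge> R \<Longrightarrow> set_integrable lborel {R..t} x"
    and sub: "\<And>t. t \<ge> R \<Longrightarrow>
      x t \<le> f t + K/t + (1/t) * (LINT s:{R..t}|lborel. (1 + a + c * s powr (-\<epsilon>)) * x s)"
    and dg: "\<And>s. s \<ge> R \<Longrightarrow> (g0 has_real_derivative g01 s) (at s)"
    and g01: "\<And>s. s \<ge> R \<Longrightarrow> 0 \<le> g01 s"
    and g0: "\<And>s. s \<ge> R \<Longrightarrow> g0 R \<le> g0 s"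
    and df: "\<And>s. s \<ge> R \<Longrightarrow> ((\<lambda>s. s * f s) has_real_derivative f1 s) (at s)"
    and hf: "\<And>s. s \<ge> R \<Longrightarrow> f1 s \<le> exp (-(c/\<epsilon>)) * s powr (1 + a) * g01 s"
    and f: "continuous_on {R..} f" and fpos: "\<And>t. t \<ge> R \<Longrightarrow> 0 < f t"
  shows "\<exists>A. \<forall>t\<ge>R. x t \<le> t powr a * (A + g0 t)"
proof -
  define e0 where "e0 = exp (-(c/\<epsilon>))"
  define A where "A = (R * f R + K) / (e0 * R powr (1 + a)) + 1 - g0 R"
  have e0: "0 < e0" and R0: "0 < R" and Rp: "0 < R powr (1 + a)"
    using R by (simp_all add: e0_def)
  have Rf: "0 \<le> R * f R + K" using fpos[of R] R0 K by simp
  have gpos: "0 < A + g0 s" if "s \<ge> R" for s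
    using g0[OF that] Rf e0 Rp unfolding A_def by (smt (verit) divide_nonneg_pos mult_pos_pos)
  have E: "e0 \<le> correction_factor c \<epsilon> s" "correction_factor c \<epsilon> s \<le> 1" if "s \<ge> R" for s
    using correction_factor_bounds[of s \<epsilon> c] that R eps c unfolding e0_def by auto
  have "x t \<le> t powr a * (A + g0 t)" if t: "t \<ge> R" for t
  proof -
    have "x t \<le> t powr a * correction_factor c \<epsilon> t * (A + g0 t)"
    proof (rule volterra_bound_weighted[where g="\<lambda>s. A + g0 s", OF R0 eps c a K t xnn xint sub _ gpos df _ f fpos])
      show "((\<lambda>s. A + g0 s) has_real_derivative g01 s) (at s)" if "s \<ge> R" for s
        using DERIV_add[OF DERIV_const dg[OF that]] by simp
      show "f1 s \<le> s powr (1 + a) * correction_factor c \<epsilon> s * g01 s" if s: "s \<ge> R" for s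
        using order_trans[OF hf[OF s, folded e0_def] mult_right_mono[OF mult_right_mono[OF E(1)[OF s]]]] g01[OF s]
        by (simp add: mult_ac)
      have "R * f R + K \<le> e0 * R powr (1 + a) * (A + g0 R)"
        unfolding A_def using e0 Rp Rf by (simp add: field_simps)
      also have "\<dots> \<le> correction_factor c \<epsilon> R * R powr (1 + a) * (A + g0 R)"
        using E(1)[of R] gpos[of R] Rp by (intro mult_right_mono) auto
      also have "\<dots> = R * (R powr a * correction_factor c \<epsilon> R * (A + g0 R))"
        using R0 by (simp add: powr_add mult_ac)
      finally show "K \<le> R * (R powr a * correction_factor c \<epsilon> R * (A + g0 R)) - R * f R" by simp
    qed
    also have "\<dots> \<le> t powr a * 1 * (A + g0 t)"
      using E(2)[OF t] gpos[OF t] by (intro mult_right_mono mult_left_mono) auto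
    finally show ?thesis by simp
  qed
  then show ?thesis by blast
qed

lemma has_real_derivative_times_powr:
  assumes "0 < s"
  shows "((\<lambda>s. s * (C * s powr \<theta>)) has_real_derivative C * (1 + \<theta>) * s powr \<theta>) (at s)"
proof -
  note d = DERIV_mult[OF DERIV_ident DERIV_cmult[OF has_real_derivative_powr[OF assms, of \<theta>], of C]]
  have "s powr (\<theta> - 1) = s powr \<theta> / s" using assms by (simp add: powr_diff)
  then show ?thesis using assms by (intro DERIV_cong[OF d]) (simp add: field_simps)
qed

lemma has_real_derivative_times_powr_ln:
  assumes "0 < s"
  shows "((\<lambda>s. s * (C * s powr \<theta> * ln s)) has_real_derivative
    C * ((1 + \<theta>) * s powr \<theta> * ln s + s powr \<theta>)) (at s)"
proof -
  note d = DERIV_mult[OF DERIV_ident DERIV_mult[OF DERIV_cmult[OF has_real_derivative_powr[OF assms, of \<theta>], of C]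
        DERIV_ln[OF assms]]]
  have "s powr (\<theta> - 1) = s powr \<theta> / s" using assms by (simp add: powr_diff)
  then show ?thesis using assms by (intro DERIV_cong[OF d]) (simp add: field_simps)
qed

lemma powr_diff_one_cancel:
  fixes s a \<theta> :: real
  assumes "0 < s"
  shows "s powr (1 + a) * s powr (\<theta> - a - 1) = s powr \<theta>"
    and "s powr (1 + a) * (s powr (\<theta> - a) / s) = s powr \<theta>"
proof -
  show "s powr (1 + a) * s powr (\<theta> - a - 1) = s powr \<theta>" by (simp flip: powr_add)
  then show "s powr (1 + a) * (s powr (\<theta> - a) / s) = s powr \<theta>"
    using assms powr_diff[of s "\<theta> - a" 1] by simp
qed

lemma volterra_bound_powr_source:
  fixes x g0 g01 :: "real \<Rightarrow> real"
  assumes R: "1 \<le> R" and eps: "0 < \<epsilon>" and c: "0 \<le> c" and a: "0 \<le> a" and K: "0 \<le> K" and C: "0 < C"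
    and xnn: "\<And>t. t \<ge> R \<Longrightarrow> 0 \<le> x t"
    and xint: "\<And>t. t \<ge> R \<Longrightarrow> set_integrable lborel {R..t} x"
    and sub: "\<And>t. t \<ge> R \<Longrightarrow>
      x t \<le> C * t powr \<theta> + K/t + (1/t) * (LINT s:{R..t}|lborel. (1 + a + c * s powr (-\<epsilon>)) * x s)"
    and dg: "\<And>s. s \<ge> R \<Longrightarrow> (g0 has_real_derivative g01 s) (at s)"
    and g01: "\<And>s. s \<ge> R \<Longrightarrow> 0 \<le> g01 s"
    and g0: "\<And>s. s \<ge> R \<Longrightarrow> g0 R \<le> g0 s"
    and hg: "\<And>s. s \<ge> R \<Longrightarrow> C * (1 + \<theta>) * s powr \<theta> \<le> exp (-(c/\<epsilon>)) * s powr (1 + a) * g01 s"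
  shows "\<exists>A. \<forall>t\<ge>R. x t \<le> t powr a * (A + g0 t)"
proof (rule volterra_bound_powr_weight[OF R eps c a K xnn xint sub dg g01 g0 _ hg])
  show "((\<lambda>s. s * (C * s powr \<theta>)) has_real_derivative C * (1 + \<theta>) * s powr \<theta>) (at s)" if "s \<ge> R" for s
    using has_real_derivative_times_powr that R by simp
  show "continuous_on {R..} (\<lambda>t. C * t powr \<theta>)"
    by (rule continuous_at_imp_continuous_on) (use R in \<open>auto intro!: continuous_intros\<close>)
  show "0 < C * t powr \<theta>" if "t \<ge> R" for t using C R that by simp
qed

lemma mult_powr_le_abs_mult_powr:
  fixes t a \<theta> L A :: real
  assumes t: "1 \<le> t" and a: "a \<le> \<theta>" and L: "1 \<le> L"
  shows "A * t powr a \<le> \<bar>A\<bar> * (t powr \<theta> * L)"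
proof -
  have "A * t powr a \<le> \<bar>A\<bar> * t powr a" by (simp add: mult_right_mono)
  also have "\<dots> \<le> \<bar>A\<bar> * t powr \<theta>" using powr_mono[OF a t] by (simp add: mult_left_mono)
  also have "\<dots> \<le> \<bar>A\<bar> * (t powr \<theta> * L)" using L by (simp add: mult_left_mono mult_le_cancel_left1)
  finally show ?thesis .
qed

lemma volterra_bound_subcritical:
  fixes x :: "real \<Rightarrow> real"
  assumes R: "1 \<le> R" and eps: "0 < \<epsilon>" and c: "0 \<le> c" and a: "0 \<le> a" and K: "0 \<le> K" and C: "0 < C"
    and \<theta>: "0 \<le> \<theta>" "\<theta> < a"
    and xnn: "\<And>t. t \<ge> R \<Longrightarrow> 0 \<le> x t"
    and xint: "\<And>t. t \<ge> R \<Longrightarrow> set_integrable lborel {R..t} x"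
    and sub: "\<And>t. t \<ge> R \<Longrightarrow>
      x t \<le> C * t powr \<theta> + K/t + (1/t) * (LINT s:{R..t}|lborel. (1 + a + c * s powr (-\<epsilon>)) * x s)"
  shows "\<exists>Ct>0. \<forall>t\<ge>R. x t \<le> Ct * t powr a"
proof -
  define B where "B = C * (1 + \<theta>) / (exp (-(c/\<epsilon>)) * (a - \<theta>))"
  have B: "0 < B" unfolding B_def using C \<theta> by simp
  have "\<exists>A. \<forall>t\<ge>R. x t \<le> t powr a * (A + (- B * t powr (\<theta> - a)))"
  proof (rule volterra_bound_powr_source[OF R eps c a K C xnn xint sub])
    show "((\<lambda>s. - B * s powr (\<theta> - a)) has_real_derivative B * (a - \<theta>) * s powr (\<theta> - a - 1)) (at s)"
      if "s \<ge> R" for s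
      using DERIV_cmult[OF has_real_derivative_powr[of s "\<theta> - a"], of "-B"] that R
      by (simp add: algebra_simps)
    show "- B * R powr (\<theta> - a) \<le> - B * s powr (\<theta> - a)" if "s \<ge> R" for s
      using powr_mono2'[of "\<theta> - a" R s] that R \<theta> B by simp
    show "C * (1 + \<theta>) * s powr \<theta> \<le> exp (-(c/\<epsilon>)) * s powr (1 + a) * (B * (a - \<theta>) * s powr (\<theta> - a - 1))"
      if "s \<ge> R" for s
    proof -
      have "exp (-(c/\<epsilon>)) * s powr (1 + a) * (B * (a - \<theta>) * s powr (\<theta> - a - 1))
          = (exp (-(c/\<epsilon>)) * B * (a - \<theta>)) * (s powr (1 + a) * s powr (\<theta> - a - 1))"
        by (simp only: mult_ac)
      also have "\<dots> = C * (1 + \<theta>) * s powr \<theta>"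
        using powr_diff_one_cancel(1)[of s a \<theta>] that R \<theta> by (simp add: B_def)
      finally show ?thesis by simp
    qed
    show "0 \<le> B * (a - \<theta>) * s powr (\<theta> - a - 1)" for s using B \<theta> by simp
  qed
  then obtain A where A: "\<And>t. t \<ge> R \<Longrightarrow> x t \<le> t powr a * (A + (- B * t powr (\<theta> - a)))" by blast
  have "x t \<le> max A 1 * t powr a" if "R \<le> t" for t
  proof -
    have "A + (- B * t powr (\<theta> - a)) \<le> max A 1" using B by (simp add: max.coboundedI1)
    then have "t powr a * (A + (- B * t powr (\<theta> - a))) \<le> t powr a * max A 1"
      by (rule mult_left_mono) simp
    then show ?thesis using A[OF that] by (simp add: mult.commute)
  qed
  then show ?thesis by (intro exI[of _ "max A 1"]) auto
qed

lemma volterra_bound_critical: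
  fixes x :: "real \<Rightarrow> real"
  assumes R: "exp 1 \<le> R" and eps: "0 < \<epsilon>" and c: "0 \<le> c" and a: "0 \<le> a" and K: "0 \<le> K" and C: "0 < C"
    and xnn: "\<And>t. t \<ge> R \<Longrightarrow> 0 \<le> x t"
    and xint: "\<And>t. t \<ge> R \<Longrightarrow> set_integrable lborel {R..t} x"
    and sub: "\<And>t. t \<ge> R \<Longrightarrow>
      x t \<le> C * t powr a + K/t + (1/t) * (LINT s:{R..t}|lborel. (1 + a + c * s powr (-\<epsilon>)) * x s)"
  shows "\<exists>Ct>0. \<forall>t\<ge>R. x t \<le> Ct * t powr a * ln t"
proof -
  have R1: "1 \<le> R" using R exp_ge_add_one_self[of 1] by linarith
  have ln1: "1 \<le> ln t" if "R \<le> t" for t using ln_mono[of "exp 1" t] R that by simp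
  define B where "B = C * (1 + a) / exp (-(c/\<epsilon>))"
  have B: "0 < B" unfolding B_def using C a by simp
  have "\<exists>A. \<forall>t\<ge>R. x t \<le> t powr a * (A + B * ln t)"
  proof (rule volterra_bound_powr_source[OF R1 eps c a K C xnn xint sub])
    show "((\<lambda>s. B * ln s) has_real_derivative B * (1 / s)) (at s)" if "s \<ge> R" for s
      using DERIV_cmult[OF DERIV_ln[of s], of B] that R1 by (simp add: divide_inverse)
    show "B * ln R \<le> B * ln s" if "s \<ge> R" for s
      using that R1 B by (intro mult_left_mono) auto
    show "C * (1 + a) * s powr a \<le> exp (-(c/\<epsilon>)) * s powr (1 + a) * (B * (1 / s))" if "s \<ge> R" for s
      using that R1 by (simp add: B_def powr_add)
    show "0 \<le> B * (1 / s)" if "s \<ge> R" for s using B R1 that by simp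
  qed
  then obtain A where A: "\<And>t. t \<ge> R \<Longrightarrow> x t \<le> t powr a * (A + B * ln t)" by blast
  have "x t \<le> (\<bar>A\<bar> + B) * t powr a * ln t" if t: "R \<le> t" for t
  proof -
    have "A \<le> \<bar>A\<bar> * ln t" using ln1[OF t] by (smt (verit) mult_le_cancel_left1)
    then have "A + B * ln t \<le> (\<bar>A\<bar> + B) * ln t" by (simp add: algebra_simps)
    then show ?thesis using A[OF t] by (smt (verit) mult.assoc mult.commute mult_left_mono powr_ge_zero)
  qed
  then show ?thesis using B by (intro exI[of _ "\<bar>A\<bar> + B"]) auto
qed

lemma volterra_bound_supercritical:
  fixes x :: "real \<Rightarrow> real"
  assumes R: "1 \<le> R" and eps: "0 < \<epsilon>" and c: "0 \<le> c" and a: "0 \<le> a" and K: "0 \<le> K" and C: "0 < C"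
    and \<theta>: "a < \<theta>"
    and xnn: "\<And>t. t \<ge> R \<Longrightarrow> 0 \<le> x t"
    and xint: "\<And>t. t \<ge> R \<Longrightarrow> set_integrable lborel {R..t} x"
    and sub: "\<And>t. t \<ge> R \<Longrightarrow>
      x t \<le> C * t powr \<theta> + K/t + (1/t) * (LINT s:{R..t}|lborel. (1 + a + c * s powr (-\<epsilon>)) * x s)"
  shows "\<exists>Ct>0. \<forall>t\<ge>R. x t \<le> Ct * t powr \<theta>"
proof -
  define B where "B = C * (1 + \<theta>) / (exp (-(c/\<epsilon>)) * (\<theta> - a))"
  have B: "0 < B" unfolding B_def using C a \<theta> by simp
  have "\<exists>A. \<forall>t\<ge>R. x t \<le> t powr a * (A + B * t powr (\<theta> - a))"
  proof (rule volterra_bound_powr_source[OF R eps c a K C xnn xint sub])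
    show "((\<lambda>s. B * s powr (\<theta> - a)) has_real_derivative B * (\<theta> - a) * s powr (\<theta> - a - 1)) (at s)"
      if "s \<ge> R" for s
      using DERIV_cmult[OF has_real_derivative_powr[of s "\<theta> - a"], of B] that R
      by (simp add: algebra_simps)
    show "B * R powr (\<theta> - a) \<le> B * s powr (\<theta> - a)" if "s \<ge> R" for s
      using powr_mono2[of "\<theta> - a" R s] that R \<theta> B by simp
    show "C * (1 + \<theta>) * s powr \<theta> \<le> exp (-(c/\<epsilon>)) * s powr (1 + a) * (B * (\<theta> - a) * s powr (\<theta> - a - 1))"
      if "s \<ge> R" for s
    proof -
      have "exp (-(c/\<epsilon>)) * s powr (1 + a) * (B * (\<theta> - a) * s powr (\<theta> - a - 1))
          = (exp (-(c/\<epsilon>)) * B * (\<theta> - a)) * (s powr (1 + a) * s powr (\<theta> - a - 1))"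
        by (simp only: mult_ac)
      also have "\<dots> = C * (1 + \<theta>) * s powr \<theta>"
        using powr_diff_one_cancel(1)[of s a \<theta>] that R \<theta> by (simp add: B_def)
      finally show ?thesis by simp
    qed
    show "0 \<le> B * (\<theta> - a) * s powr (\<theta> - a - 1)" for s using B \<theta> by simp
  qed
  then obtain A where A: "\<And>t. t \<ge> R \<Longrightarrow> x t \<le> t powr a * (A + B * t powr (\<theta> - a))" by blast
  have "x t \<le> (\<bar>A\<bar> + B) * t powr \<theta>" if t: "R \<le> t" for t
  proof -
    have "x t \<le> A * t powr a + B * t powr \<theta>"
      using A[OF t] t R by (simp add: algebra_simps flip: powr_add)
    moreover have "A * t powr a \<le> \<bar>A\<bar> * t powr \<theta>"
      using mult_powr_le_abs_mult_powr[of t a \<theta> 1 A] \<theta> t R by simp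
    ultimately show ?thesis by (simp add: algebra_simps)
  qed
  then show ?thesis using B by (intro exI[of _ "\<bar>A\<bar> + B"]) auto
qed

lemma volterra_bound_log_source:
  fixes x :: "real \<Rightarrow> real"
  assumes R: "exp 1 \<le> R" and eps: "0 < \<epsilon>" and c: "0 \<le> c" and a: "0 \<le> a" and K: "0 \<le> K" and C: "0 < C"
    and \<theta>: "a < \<theta>"
    and xnn: "\<And>t. t \<ge> R \<Longrightarrow> 0 \<le> x t"
    and xint: "\<And>t. t \<ge> R \<Longrightarrow> set_integrable lborel {R..t} x"
    and sub: "\<And>t. t \<ge> R \<Longrightarrow>
      x t \<le> C * t powr \<theta> * ln t + K/t + (1/t) * (LINT s:{R..t}|lborel. (1 + a + c * s powr (-\<epsilon>)) * x s)"
  shows "\<exists>Ct>0. \<forall>t\<ge>R. x t \<le> Ct * t powr \<theta> * ln t"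
proof -
  have R1: "1 \<le> R" using R exp_ge_add_one_self[of 1] by linarith
  have ln1: "1 \<le> ln t" if "R \<le> t" for t using ln_mono[of "exp 1" t] R that by simp
  define e0 where "e0 = exp (-(c/\<epsilon>))"
  define B where "B = C * (2 + \<theta>) / (e0 * (\<theta> - a))"
  have e0: "0 < e0" and B: "0 < B" unfolding B_def e0_def using C a \<theta> by simp_all
  have "\<exists>A. \<forall>t\<ge>R. x t \<le> t powr a * (A + B * (t powr (\<theta> - a) * ln t))"
  proof (rule volterra_bound_powr_weight[OF R1 eps c a K xnn xint sub])
    show "((\<lambda>s. B * (s powr (\<theta> - a) * ln s)) has_real_derivative
       B * ((\<theta> - a) * s powr (\<theta> - a - 1) * ln s + s powr (\<theta> - a) / s)) (at s)" if "s \<ge> R" for s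
      using that R1 by (auto intro!: derivative_eq_intros simp: field_simps)
    show "0 \<le> B * ((\<theta> - a) * s powr (\<theta> - a - 1) * ln s + s powr (\<theta> - a) / s)" if "s \<ge> R" for s
      using B \<theta> that R1 by simp
    show "B * (R powr (\<theta> - a) * ln R) \<le> B * (s powr (\<theta> - a) * ln s)" if "s \<ge> R" for s
      using powr_mono2[of "\<theta> - a" R s] that R1 \<theta> B by (intro mult_left_mono mult_mono) auto
    show "((\<lambda>s. s * (C * s powr \<theta> * ln s)) has_real_derivative C * ((1 + \<theta>) * s powr \<theta> * ln s + s powr \<theta>)) (at s)"
      if "s \<ge> R" for s using has_real_derivative_times_powr_ln that R1 by simp
    show "C * ((1 + \<theta>) * s powr \<theta> * ln s + s powr \<theta>) \<le> exp (-(c/\<epsilon>)) * s powr (1 + a) *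
       (B * ((\<theta> - a) * s powr (\<theta> - a - 1) * ln s + s powr (\<theta> - a) / s))" if s: "s \<ge> R" for s
    proof -
      have "C * ((1 + \<theta>) * s powr \<theta> * ln s + s powr \<theta>) \<le> C * (2 + \<theta>) * s powr \<theta> * ln s"
        using C ln1[OF s] by (simp add: algebra_simps mult_le_cancel_right1)
      also have "\<dots> \<le> C * (2 + \<theta>) * s powr \<theta> * ln s + e0 * B * s powr \<theta>" using e0 B by simp
      also have "\<dots> = e0 * s powr (1 + a) * (B * ((\<theta> - a) * s powr (\<theta> - a - 1) * ln s + s powr (\<theta> - a) / s))"
        using powr_diff_one_cancel[of s a \<theta>] s R1 e0 \<theta> by (simp add: B_def field_simps)
      finally show ?thesis unfolding e0_def .
    qed
    show "continuous_on {R..} (\<lambda>t. C * t powr \<theta> * ln t)"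
      by (rule continuous_at_imp_continuous_on) (use R1 in \<open>auto intro!: continuous_intros\<close>)
    show "0 < C * t powr \<theta> * ln t" if "t \<ge> R" for t
      using C ln1[OF that] that R1 by (intro mult_pos_pos) (auto, smt (verit) ln_le_minus_one)
  qed
  then obtain A where A: "\<And>t. t \<ge> R \<Longrightarrow> x t \<le> t powr a * (A + B * (t powr (\<theta> - a) * ln t))" by blast
  have "x t \<le> (\<bar>A\<bar> + B) * t powr \<theta> * ln t" if t: "R \<le> t" for t
  proof -
    have "x t \<le> A * t powr a + B * t powr \<theta> * ln t"
      using A[OF t] t R1 by (simp add: algebra_simps flip: powr_add)
    moreover have "A * t powr a \<le> \<bar>A\<bar> * (t powr \<theta> * ln t)"
      using mult_powr_le_abs_mult_powr[of t a \<theta> "ln t" A] \<theta> t R1 ln1[OF t] by simp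
    ultimately show ?thesis by (simp add: algebra_simps)
  qed
  then show ?thesis using B by (intro exI[of _ "\<bar>A\<bar> + B"]) auto
qed

lemma set_integral_head_tail_bound:
  fixes x d D :: "real \<Rightarrow> real"
  assumes R: "0 < R" and t: "R \<le> t"
    and xnn: "\<And>s. s \<ge> 0 \<Longrightarrow> 0 \<le> x s" and x: "set_integrable lborel {0..t} x"
    and dle: "\<And>s. s \<ge> R \<Longrightarrow> d s \<le> D s"
    and D: "continuous_on {R..t} D" and Dnn: "\<And>s. s \<ge> R \<Longrightarrow> 0 \<le> D s"
  shows "(LINT s:{0..t}|lborel. d s * x s)
    \<le> \<bar>LINT s:{0..<R}|lborel. d s * x s\<bar> + (LINT s:{R..t}|lborel. D s * x s)"
proof (cases "set_integrable lborel {0..t} (\<lambda>s. d s * x s)")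
  case True
  have i0: "set_integrable lborel {0..<R} (\<lambda>s. d s * x s)"
    and i1: "set_integrable lborel {R..t} (\<lambda>s. d s * x s)"
    using R t by (auto intro: set_integrable_subset[OF True])
  have Dx: "set_integrable lborel {R..t} (\<lambda>s. D s * x s)"
    by (rule set_integrable_continuous_mult[OF D set_integrable_subset[OF x]]) (use R in auto)
  have "{0..t} = {0..<R} \<union> {R..t}" "{0..<R} \<inter> {R..t} = {}" using R t by auto
  then have "(LINT s:{0..t}|lborel. d s * x s)
      = (LINT s:{0..<R}|lborel. d s * x s) + (LINT s:{R..t}|lborel. d s * x s)"
    using set_integral_Un[OF _ i0 i1] by simp
  also have "\<dots> \<le> \<bar>LINT s:{0..<R}|lborel. d s * x s\<bar> + (LINT s:{R..t}|lborel. D s * x s)"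
    using dle xnn R by (intro add_mono abs_ge_self set_integral_mono[OF i1 Dx]) (auto intro: mult_right_mono)
  finally show ?thesis .
next
  case False
  then have "(LINT s:{0..t}|lborel. d s * x s) = 0"
    unfolding set_lebesgue_integral_def set_integrable_def by (rule not_integrable_integral_eq)
  moreover have "0 \<le> (LINT s:{R..t}|lborel. D s * x s)"
    by (rule set_integral_nonneg) (use Dnn xnn R in auto)
  ultimately show ?thesis by simp
qed

lemma volterra_restrict_to_tail:
  fixes x d D F :: "real \<Rightarrow> real"
  assumes R: "0 < R"
    and xnn: "\<forall>t\<ge>0. 0 \<le> x t" and xint: "\<forall>t\<ge>0. set_integrable lborel {0..t} x"
    and dle: "\<And>s. s \<ge> R \<Longrightarrow> d s \<le> D s"
    and D: "continuous_on {R..} D" and Dnn: "\<And>s. s \<ge> R \<Longrightarrow> 0 \<le> D s"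
    and hyp: "\<forall>t\<ge>R. x t \<le> F t + 1 / t * (LINT s:{0..t}|lborel. d s * x s)"
  shows "\<exists>K\<ge>0. \<forall>t\<ge>R. x t \<le> F t + K/t + (1/t) * (LINT s:{R..t}|lborel. D s * x s)"
proof (intro exI conjI allI impI)
  let ?K = "\<bar>LINT s:{0..<R}|lborel. d s * x s\<bar>"
  fix t assume t: "R \<le> t"
  have "(LINT s:{0..t}|lborel. d s * x s) \<le> ?K + (LINT s:{R..t}|lborel. D s * x s)"
    using R t xnn xint dle Dnn continuous_on_subset[OF D]
    by (intro set_integral_head_tail_bound) auto
  then have "1 / t * (LINT s:{0..t}|lborel. d s * x s) \<le> 1 / t * (?K + (LINT s:{R..t}|lborel. D s * x s))"
    using R t by (intro mult_left_mono) auto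
  then show "x t \<le> F t + ?K/t + (1/t) * (LINT s:{R..t}|lborel. D s * x s)"
    using hyp t by (force simp: add_divide_distrib)
qed simp

lemma volterra_growth_powr_source:
  fixes x d :: "real \<Rightarrow> real"
  assumes eps: "0 < \<epsilon>" and c: "0 \<le> c" and a: "0 \<le> a" and R: "exp 1 \<le> R"
    and dle: "\<And>s. s \<ge> R \<Longrightarrow> d s \<le> 1 + a + c * s powr (-\<epsilon>)"
    and \<theta>: "0 \<le> \<theta>" and C: "0 < C"
    and xnn: "\<forall>t\<ge>0. 0 \<le> x t" and xint: "\<forall>t\<ge>0. set_integrable lborel {0..t} x"
    and hyp: "\<forall>t\<ge>R. x t \<le> C * t powr \<theta> + 1 / t * (LINT s:{0..t}|lborel. d s * x s)"
  shows "\<exists>Ct>0. \<forall>t\<ge>R. (\<theta> < a \<longrightarrow> x t \<le> Ct * t powr a) \<and>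
    (\<theta> = a \<longrightarrow> x t \<le> Ct * t powr a * ln t) \<and> (a < \<theta> \<longrightarrow> x t \<le> Ct * t powr \<theta>)"
proof -
  have R1: "1 \<le> R" using R exp_ge_add_one_self[of 1] by linarith
  have D: "continuous_on {R..} (\<lambda>s. 1 + a + c * s powr (-\<epsilon>))"
    by (rule continuous_at_imp_continuous_on) (use R1 in \<open>auto intro!: continuous_intros\<close>)
  obtain K where K: "0 \<le> K" and sub: "\<And>t. t \<ge> R \<Longrightarrow>
      x t \<le> C * t powr \<theta> + K/t + (1/t) * (LINT s:{R..t}|lborel. (1 + a + c * s powr (-\<epsilon>)) * x s)"
    using volterra_restrict_to_tail[OF _ xnn xint dle D _ hyp] R1 a c by fastforce
  have xnn': "\<And>t. t \<ge> R \<Longrightarrow> 0 \<le> x t" using xnn R1 by simp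
  have xint': "set_integrable lborel {R..t} x" if "t \<ge> R" for t
    by (rule set_integrable_subset[OF xint[rule_format, of t]]) (use R1 that in auto)
  consider "\<theta> < a" | "\<theta> = a" | "a < \<theta>" by linarith
  then show ?thesis
  proof cases
    case 1
    then show ?thesis using volterra_bound_subcritical[OF R1 eps c a K C \<theta> 1 xnn' xint' sub] by auto
  next
    case 2
    then show ?thesis using volterra_bound_critical[OF R eps c a K C xnn' xint'] sub by auto
  next
    case 3
    then show ?thesis using volterra_bound_supercritical[OF R1 eps c a K C 3 xnn' xint' sub] by auto
  qed
qed

lemma volterra_growth_log_source:
  fixes x d :: "real \<Rightarrow> real"
  assumes eps: "0 < \<epsilon>" and c: "0 \<le> c" and a: "0 \<le> a" and R: "exp 1 \<le> R"
    and dle: "\<And>s. s \<ge> R \<Longrightarrow> d s \<le> 1 + a + c * s powr (-\<epsilon>)"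
    and \<theta>: "a < \<theta>" and C: "0 < C"
    and xnn: "\<forall>t\<ge>0. 0 \<le> x t" and xint: "\<forall>t\<ge>0. set_integrable lborel {0..t} x"
    and hyp: "\<forall>t\<ge>R. x t \<le> C * t powr \<theta> * ln t + 1 / t * (LINT s:{0..t}|lborel. d s * x s)"
  shows "\<exists>Ct>0. \<forall>t\<ge>R. x t \<le> Ct * t powr \<theta> * ln t"
proof -
  have R1: "1 \<le> R" using R exp_ge_add_one_self[of 1] by linarith
  have D: "continuous_on {R..} (\<lambda>s. 1 + a + c * s powr (-\<epsilon>))"
    by (rule continuous_at_imp_continuous_on) (use R1 in \<open>auto intro!: continuous_intros\<close>)
  obtain K where K: "0 \<le> K" and sub: "\<And>t. t \<ge> R \<Longrightarrow>
      x t \<le> C * t powr \<theta> * ln t + K/t + (1/t) * (LINT s:{R..t}|lborel. (1 + a + c * s powr (-\<epsilon>)) * x s)"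
    using volterra_restrict_to_tail[OF _ xnn xint dle D _ hyp] R1 a c by fastforce
  have xnn': "\<And>t. t \<ge> R \<Longrightarrow> 0 \<le> x t" using xnn R1 by simp
  have xint': "set_integrable lborel {R..t} x" if "t \<ge> R" for t
    by (rule set_integrable_subset[OF xint[rule_format, of t]]) (use R1 that in auto)
  show ?thesis using volterra_bound_log_source[OF R eps c a K C \<theta> xnn' xint' sub] .
qed

section \<open>The kernel \<open>d\<close> of the pressure law\<close>

lemma P1_regularity:
  assumes "P1 P" and r: "0 < r"
  shows "P differentiable at r" "deriv P differentiable at r" "0 < deriv P r"
proof -
  have "\<forall>j<4. (deriv ^^ j) P differentiable at r" using assms unfolding P1_def by blast
  from this[rule_format, of 0] this[rule_format, of 1]
  show "P differentiable at r" "deriv P differentiable at r" by simp_all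
  show "0 < deriv P r" using assms unfolding P1_def by blast
qed

lemma deriv_powr_factor:
  fixes P q :: "real \<Rightarrow> real"
  assumes S: "open S" "y \<in> S" "\<And>z. z \<in> S \<Longrightarrow> z > 0"
    and eq: "\<And>z. z \<in> S \<Longrightarrow> P z = \<kappa> * z powr \<gamma> * (1 + q z)"
    and \<kappa>: "\<kappa> \<noteq> 0" and dP: "P differentiable at y"
  shows "(q has_real_derivative deriv q y) (at y)"
    and "deriv P y = \<kappa> * (\<gamma> * y powr (\<gamma> - 1) * (1 + q y) + y powr \<gamma> * deriv q y)"
proof -
  have y0: "y > 0" using S by auto
  have dP': "(P has_real_derivative deriv P y) (at y)"
    using dP DERIV_deriv_iff_real_differentiable by blast
  have "((\<lambda>z. P z / (\<kappa> * z powr \<gamma>) - 1) has_real_derivative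
      (deriv P y * (\<kappa> * y powr \<gamma>) - P y * (\<kappa> * (\<gamma> * y powr (\<gamma> - 1)))) / (\<kappa> * y powr \<gamma>)\<^sup>2) (at y)"
    using DERIV_diff[OF DERIV_divide[OF dP' DERIV_cmult[OF has_real_derivative_powr[OF y0, of \<gamma>], of \<kappa>]]
        DERIV_const[of 1]] \<kappa> y0
    by (simp add: power2_eq_square)
  then have "(q has_real_derivative
      (deriv P y * (\<kappa> * y powr \<gamma>) - P y * (\<kappa> * (\<gamma> * y powr (\<gamma> - 1)))) / (\<kappa> * y powr \<gamma>)\<^sup>2) (at y)"
    by (rule has_field_derivative_transform_within_open[OF _ S(1,2)])
      (use eq \<kappa> S(3) in \<open>force simp: field_simps\<close>)
  then show dq: "(q has_real_derivative deriv q y) (at y)"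
    using DERIV_imp_deriv by metis
  have "((\<lambda>z. \<kappa> * z powr \<gamma> * (1 + q z)) has_real_derivative
      (\<kappa> * (\<gamma> * y powr (\<gamma> - 1))) * (1 + q y) + (0 + deriv q y) * (\<kappa> * y powr \<gamma>)) (at y)"
    by (intro DERIV_mult DERIV_cmult has_real_derivative_powr y0 DERIV_add DERIV_const dq)
  then have "(P has_real_derivative
      (\<kappa> * (\<gamma> * y powr (\<gamma> - 1))) * (1 + q y) + (0 + deriv q y) * (\<kappa> * y powr \<gamma>)) (at y)"
    by (rule has_field_derivative_transform_within_open[OF _ S(1,2)]) (use eq in auto)
  then show "deriv P y = \<kappa> * (\<gamma> * y powr (\<gamma> - 1) * (1 + q y) + y powr \<gamma> * deriv q y)"
    by (auto dest!: DERIV_imp_deriv simp: algebra_simps)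
qed

lemma deriv2_powr_factor:
  fixes P q :: "real \<Rightarrow> real"
  assumes S: "open S" "y \<in> S" "\<And>z. z \<in> S \<Longrightarrow> z > 0"
    and eq: "\<And>z. z \<in> S \<Longrightarrow> P z = \<kappa> * z powr \<gamma> * (1 + q z)"
    and \<kappa>: "\<kappa> \<noteq> 0" and dP: "\<And>z. z \<in> S \<Longrightarrow> P differentiable at z"
    and dP2: "deriv P differentiable at y"
  shows "deriv (deriv P) y = \<kappa> * (\<gamma> * (\<gamma> - 1) * y powr (\<gamma> - 2) * (1 + q y)
            + 2 * \<gamma> * y powr (\<gamma> - 1) * deriv q y + y powr \<gamma> * deriv (deriv q) y)"
proof -
  have y0: "y > 0" using S by auto
  have dq: "(q has_real_derivative deriv q z) (at z)"
    and dPe: "deriv P z = \<kappa> * (\<gamma> * z powr (\<gamma> - 1) * (1 + q z) + z powr \<gamma> * deriv q z)" if "z \<in> S" for z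
    using deriv_powr_factor[OF S(1) that S(3) eq \<kappa> dP[OF that]] by blast+
  have dP2': "(deriv P has_real_derivative deriv (deriv P) y) (at y)"
    using dP2 DERIV_deriv_iff_real_differentiable by blast
  have "y powr \<gamma> \<noteq> 0" using y0 by simp
  note dH = DERIV_divide[OF DERIV_diff[OF DERIV_cdivide[OF dP2', of \<kappa>]
        DERIV_mult[OF DERIV_cmult[OF has_real_derivative_powr[OF y0, of "\<gamma> - 1"], of \<gamma>]
          DERIV_add[OF DERIV_const dq[OF S(2)]]]] has_real_derivative_powr[OF y0, of \<gamma>] this]
  have "deriv q z = (deriv P z / \<kappa> - \<gamma> * z powr (\<gamma> - 1) * (1 + q z)) / z powr \<gamma>" if "z \<in> S" for z
    using dPe[OF that] \<kappa> S(3)[OF that] by (simp add: field_simps)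
  then have "(deriv q has_real_derivative deriv (deriv q) y) (at y)"
    using has_field_derivative_transform_within_open[OF dH S(1,2)] DERIV_imp_deriv by metis
  then have "((\<lambda>z. \<kappa> * (\<gamma> * z powr (\<gamma> - 1) * (1 + q z) + z powr \<gamma> * deriv q z)) has_real_derivative
      \<kappa> * ((\<gamma> * ((\<gamma> - 1) * y powr (\<gamma> - 1 - 1))) * (1 + q y) + (0 + deriv q y) * (\<gamma> * y powr (\<gamma> - 1))
        + ((\<gamma> * y powr (\<gamma> - 1)) * deriv q y + deriv (deriv q) y * y powr \<gamma>))) (at y)"
    by (intro DERIV_mult DERIV_cmult has_real_derivative_powr y0 DERIV_add DERIV_const dq[OF S(2)])
  then have "(deriv P has_real_derivative
      \<kappa> * ((\<gamma> * ((\<gamma> - 1) * y powr (\<gamma> - 1 - 1))) * (1 + q y) + (0 + deriv q y) * (\<gamma> * y powr (\<gamma> - 1))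
        + ((\<gamma> * y powr (\<gamma> - 1)) * deriv q y + deriv (deriv q) y * y powr \<gamma>))) (at y)"
    by (rule has_field_derivative_transform_within_open[OF _ S(1,2)]) (use dPe in auto)
  moreover have "y powr (\<gamma> - 1 - 1) = y powr (\<gamma> - 2)" by simp
  ultimately show ?thesis by (auto dest!: DERIV_imp_deriv simp: algebra_simps)
qed

lemma powr_factor_coeff_nonzero:
  fixes P q :: "real \<Rightarrow> real"
  assumes S: "open S" "y \<in> S" and eq: "\<And>z. z \<in> S \<Longrightarrow> P z = \<kappa> * z powr \<gamma> * (1 + q z)"
    and pos: "deriv P y \<noteq> 0"
  shows "\<kappa> \<noteq> 0"
proof
  assume "\<kappa> = 0"
  have "(P has_real_derivative 0) (at y)"
    by (rule has_field_derivative_transform_within_open[OF DERIV_const S]) (use eq \<open>\<kappa> = 0\<close> in auto)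
  then show False using pos DERIV_imp_deriv by blast
qed

lemma set_integrable_Icc0_of_powr_bound:
  fixes f :: "real \<Rightarrow> real"
  assumes p: "-1 < p" and b: "0 \<le> b" and f: "continuous_on {0<..b} f"
    and bound: "\<And>y. y \<in> {0..b} \<Longrightarrow> \<bar>f y\<bar> \<le> M * y powr p"
  shows "set_integrable lborel {0..b} f"
proof -
  have "(\<lambda>y. y powr p) integrable_on {0..b}"
    by (rule integrable_on_powr_from_0) (use p b in auto)
  then have "(\<lambda>y. y powr p) absolutely_integrable_on {0..b}"
    by (subst absolutely_integrable_on_iff_nonneg) auto
  then have "set_integrable lborel {0..b} (\<lambda>y. y powr p)"
    unfolding set_integrable_def by (subst (asm) integrable_completion) auto
  then have g: "set_integrable lborel {0..b} (\<lambda>y. M * y powr p)" by simp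
  have f0: "f 0 = 0" using bound[of 0] b by simp
  have "(\<lambda>y. indicator {0<..b} y *\<^sub>R f y) \<in> borel_measurable borel"
    by (rule borel_measurable_continuous_on_indicator[OF _ f]) auto
  moreover have "(\<lambda>y. indicator {0<..b} y *\<^sub>R f y) = (\<lambda>y. indicator {0..b} y *\<^sub>R f y)"
    using f0 by (force simp: indicator_def)
  ultimately have "set_borel_measurable lborel {0..b} f"
    unfolding set_borel_measurable_def by simp
  then show ?thesis
    by (rule set_integrable_bound[OF g]) (use bound in \<open>auto intro: order_trans[OF _ abs_ge_self]\<close>)
qed

lemma has_real_derivative_set_integral_Icc0:
  fixes f :: "real \<Rightarrow> real"
  assumes b: "0 < b" and fi: "set_integrable lborel {0..b} f" and fc: "continuous_on {b..} f"
    and s: "b < s"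
  shows "((\<lambda>z. LINT y:{0..z}|lborel. f y) has_real_derivative f s) (at s)"
proof -
  define I0 where "I0 = (LINT y:{0..<b}|lborel. f y)"
  have eq: "(LINT y:{0..z}|lborel. f y) = I0 + integral {b..z} f" if z: "b < z" for z
  proof -
    have i0: "set_integrable lborel {0..<b} f" by (rule set_integrable_subset[OF fi]) auto
    have i1: "set_integrable lborel {b..z} f"
      by (rule borel_integrable_atLeastAtMost') (use fc in \<open>auto elim: continuous_on_subset\<close>)
    have "{0..z} = {0..<b} \<union> {b..z}" "{0..<b} \<inter> {b..z} = {}" using b z by auto
    then show ?thesis
      using set_integral_Un[OF _ i0 i1] set_borel_integral_eq_integral(2)[OF i1] unfolding I0_def by simp
  qed
  have "((\<lambda>z. integral {b..z} f) has_real_derivative f s) (at s within {b..s+1})"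
    by (rule integral_has_real_derivative[OF continuous_on_subset[OF fc]]) (use s in auto)
  then have "((\<lambda>z. integral {b..z} f) has_real_derivative f s) (at s)"
    using at_within_interior[of s "{b..s+1}"] s by simp
  then have "((\<lambda>z. I0 + integral {b..z} f) has_real_derivative f s) (at s)"
    using DERIV_add[OF DERIV_const] by fastforce
  then show ?thesis
    by (rule has_field_derivative_transform_within_open[of _ _ _ "{b<..}"]) (use s eq in auto)
qed
lemma deriv_le_powr_near_zero:
  fixes P q :: "real \<Rightarrow> real"
  assumes \<gamma>: "1 < \<gamma>" and b: "0 < b" "b < r" "b \<le> 1"
    and eq: "\<And>z. z \<in> {0<..<r} \<Longrightarrow> P z = \<kappa> * z powr \<gamma> * (1 + q z)" and \<kappa>: "\<kappa> \<noteq> 0"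
    and dP: "\<And>z. 0 < z \<Longrightarrow> P differentiable at z"
    and q0: "\<And>z. z \<in> {0<..<r} \<Longrightarrow> \<bar>q z\<bar> \<le> Cl * z powr (\<gamma> - 1)"
    and q1: "\<And>z. z \<in> {0<..<r} \<Longrightarrow> \<bar>deriv q z\<bar> \<le> Cl * z powr (\<gamma> - 2)"
    and y: "y \<in> {0<..b}"
  shows "deriv P y \<le> \<bar>\<kappa>\<bar> * (\<gamma> * (1 + \<bar>Cl\<bar>) + \<bar>Cl\<bar>) * y powr (\<gamma> - 1)"
proof -
  have yS: "y \<in> {0<..<r}" and y0: "0 < y" using y b by auto
  have e: "deriv P y = \<kappa> * (\<gamma> * y powr (\<gamma> - 1) * (1 + q y) + y powr \<gamma> * deriv q y)"
    using deriv_powr_factor(2)[of "{0<..<r}" y, OF _ yS _ eq \<kappa> dP[OF y0]] by auto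
  have p1: "y powr (\<gamma> - 1) \<le> 1" using y b \<gamma> by (intro powr_le1) auto
  have "\<bar>q y\<bar> \<le> \<bar>Cl\<bar> * y powr (\<gamma> - 1)"
    using q0[OF yS] by (rule order_trans) (simp add: mult_right_mono)
  also have "\<dots> \<le> \<bar>Cl\<bar>" using p1 by (simp add: mult_left_le)
  finally have A: "\<bar>\<gamma> * y powr (\<gamma> - 1) * (1 + q y)\<bar> \<le> \<gamma> * y powr (\<gamma> - 1) * (1 + \<bar>Cl\<bar>)"
    using \<gamma> by (simp add: abs_mult mult_left_mono)
  have "\<bar>y powr \<gamma> * deriv q y\<bar> \<le> y powr \<gamma> * (\<bar>Cl\<bar> * y powr (\<gamma> - 2))"
    using order_trans[OF q1[OF yS] mult_right_mono[of Cl "\<bar>Cl\<bar>"]] by (simp add: abs_mult mult_left_mono)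
  also have "\<dots> = \<bar>Cl\<bar> * y powr (\<gamma> - 1) * y powr (\<gamma> - 1)"
    by (simp add: mult_ac flip: powr_add)
  also have "\<dots> \<le> \<bar>Cl\<bar> * y powr (\<gamma> - 1)" using p1 by (simp add: mult_left_le)
  finally have B: "\<bar>y powr \<gamma> * deriv q y\<bar> \<le> \<bar>Cl\<bar> * y powr (\<gamma> - 1)" .
  have "deriv P y \<le> \<bar>\<kappa>\<bar> * \<bar>\<gamma> * y powr (\<gamma> - 1) * (1 + q y) + y powr \<gamma> * deriv q y\<bar>"
    unfolding e by (metis abs_ge_self abs_mult)
  also have "\<dots> \<le> \<bar>\<kappa>\<bar> * (\<gamma> * y powr (\<gamma> - 1) * (1 + \<bar>Cl\<bar>) + \<bar>Cl\<bar> * y powr (\<gamma> - 1))"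
    using abs_triangle_ineq[of "\<gamma> * y powr (\<gamma> - 1) * (1 + q y)" "y powr \<gamma> * deriv q y"] A B
    by (intro mult_left_mono) auto
  also have "\<dots> = \<bar>\<kappa>\<bar> * (\<gamma> * (1 + \<bar>Cl\<bar>) + \<bar>Cl\<bar>) * y powr (\<gamma> - 1)" by (simp add: algebra_simps)
  finally show ?thesis .
qed

text \<open>Near the vacuum \<open>\<surd>P'(y)/y = O(y^((\<gamma>\<^sub>1 - 3)/2))\<close> with \<open>\<gamma>\<^sub>1 > 1\<close>, so the integral
  defining \<open>k\<close> converges; otherwise \<open>kfun\<close> would be the junk value \<open>0\<close>.\<close>
lemma set_integrable_kfun_integrand:
  assumes hP1: "P1 P" and hP2: "P2 P rho_lo kappa1 gamma1 Clo calP1"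
    and b: "0 < b" "b < rho_lo" "b \<le> 1"
  shows "set_integrable lborel {0..b} (\<lambda>y. sqrt (deriv P y) / y)"
proof -
  have \<gamma>: "1 < gamma1" using hP2 unfolding P2_def by auto
  have eq: "\<And>z. z \<in> {0<..<rho_lo} \<Longrightarrow> P z = kappa1 * z powr gamma1 * (1 + calP1 z)"
    using hP2 unfolding P2_def by auto
  have bnd: "\<forall>j\<le>4. \<forall>z. 0 < z \<and> z < rho_lo \<longrightarrow> \<bar>(deriv ^^ j) calP1 z\<bar> \<le> Clo * z powr (gamma1 - 1 - real j)"
    using hP2 unfolding P2_def by blast
  have \<kappa>: "kappa1 \<noteq> 0"
    using powr_factor_coeff_nonzero[of "{0<..<rho_lo}" b, OF _ _ eq] P1_regularity(3)[OF hP1 b(1)] b by force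
  define M where "M = \<bar>kappa1\<bar> * (gamma1 * (1 + \<bar>Clo\<bar>) + \<bar>Clo\<bar>)"
  have dP: "deriv P y \<le> M * y powr (gamma1 - 1)" if "y \<in> {0<..b}" for y
    unfolding M_def
    by (rule deriv_le_powr_near_zero[OF \<gamma> b eq \<kappa> P1_regularity(1)[OF hP1] _ _ that])
      (use bnd[rule_format, of 0] bnd[rule_format, of 1] in \<open>auto simp: diff_diff_eq\<close>)
  show ?thesis
  proof (rule set_integrable_Icc0_of_powr_bound)
    show "-1 < (gamma1 - 1) / 2 - 1" using \<gamma> by simp
    show "continuous_on {0<..b} (\<lambda>y. sqrt (deriv P y) / y)"
      by (rule continuous_at_imp_continuous_on)
        (use P1_regularity(2)[OF hP1, THEN differentiable_imp_continuous_within] in \<open>auto intro!: continuous_intros\<close>)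
    show "\<bar>sqrt (deriv P y) / y\<bar> \<le> sqrt M * y powr ((gamma1 - 1) / 2 - 1)" if "y \<in> {0..b}" for y
    proof (cases "y = 0")
      case False
      then have y: "y \<in> {0<..b}" using that by auto
      have "sqrt (deriv P y) \<le> sqrt (M * y powr (gamma1 - 1))" using dP[OF y] by simp
      also have "\<dots> = sqrt M * y powr ((gamma1 - 1) / 2)"
        using y by (simp add: real_sqrt_mult powr_half_sqrt[symmetric] powr_powr)
      finally have "sqrt (deriv P y) \<le> sqrt M * y powr ((gamma1 - 1) / 2)" .
      then show ?thesis
        using y P1_regularity(3)[OF hP1, of y] by (simp add: powr_diff divide_right_mono)
    qed simp
  qed (use b in simp)
qed

lemma kfun_has_real_derivative:
  assumes hP1: "P1 P" and hP2: "P2 P rho_lo kappa1 gamma1 Clo calP1" and s: "0 < s"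
  shows "(kfun P has_real_derivative sqrt (deriv P s) / s) (at s)"
proof -
  define b where "b = min (min (rho_lo / 2) 1) (s / 2)"
  have b: "0 < b" "b < rho_lo" "b \<le> 1" "b < s"
    using hP2 s unfolding P2_def b_def by auto
  have "continuous_on {b..} (\<lambda>y. sqrt (deriv P y) / y)"
    by (rule continuous_at_imp_continuous_on)
      (use b P1_regularity(2)[OF hP1, THEN differentiable_imp_continuous_within] in \<open>auto intro!: continuous_intros\<close>)
  with b have "((\<lambda>z. LINT y:{0..z}|lborel. sqrt (deriv P y) / y) has_real_derivative sqrt (deriv P s) / s) (at s)"
    by (intro has_real_derivative_set_integral_Icc0 set_integrable_kfun_integrand[OF hP1 hP2])
  moreover have "kfun P z = (LINT y:{0..z}|lborel. sqrt (deriv P y) / y)" if "0 \<le> z" for z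
    unfolding kfun_def using interval_integral_Icc[of 0 z] that by (simp add: zero_ereal_def)
  ultimately show ?thesis
    using has_field_derivative_transform_within_open[of _ _ s "{0<..}" "kfun P"] s by auto
qed

lemma dfun_eq:
  assumes hP1: "P1 P" and hP2: "P2 P rho_lo kappa1 gamma1 Clo calP1" and s: "0 < s"
  shows "dfun P s = 1 + s * deriv (deriv P) s / (2 * deriv P s)"
proof -
  define p where "p = deriv P s"
  define p2 where "p2 = deriv (deriv P) s"
  have p: "0 < p" unfolding p_def using P1_regularity(3)[OF hP1 s] .
  have "eventually (\<lambda>z. z \<in> {0<..}) (nhds s)"
    using s by (intro eventually_nhds_in_open) auto
  then have "eventually (\<lambda>z. deriv (kfun P) z = sqrt (deriv P z) / z) (nhds s)"
    by eventually_elim (use DERIV_imp_deriv[OF kfun_has_real_derivative[OF hP1 hP2]] in auto)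
  then have dk2: "deriv (deriv (kfun P)) s = deriv (\<lambda>z. sqrt (deriv P z) / z) s"
    by (rule deriv_cong_ev) simp
  have "(deriv P has_real_derivative p2) (at s)"
    unfolding p2_def using P1_regularity(2)[OF hP1 s] DERIV_deriv_iff_real_differentiable by blast
  note D = DERIV_divide[OF DERIV_chain2[OF DERIV_real_sqrt[OF p[unfolded p_def]] this] DERIV_ident]
  have "deriv (deriv (kfun P)) s = (inverse (sqrt p) / 2 * p2 * s - sqrt p) / (s * s)"
    using DERIV_imp_deriv[OF D] s unfolding dk2 p_def by simp
  moreover have "deriv (kfun P) s = sqrt p / s"
    using DERIV_imp_deriv[OF kfun_has_real_derivative[OF hP1 hP2 s]] unfolding p_def .
  moreover have "2 + s * ((inverse r / 2 * p2 * s - r) / (s * s)) / (r / s) = 1 + s * p2 / (2 * (r * r))"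
    if "0 < r" for r using that s by (simp add: field_simps)
  ultimately have "dfun P s = 1 + s * p2 / (2 * (sqrt p * sqrt p))"
    unfolding dfun_def using p by simp
  then show ?thesis using p unfolding p_def p2_def by simp
qed

text \<open>With \<open>A\<^sub>0 = q\<close>, \<open>A\<^sub>1 = s q'\<close>, \<open>A\<^sub>2 = s\<^sup>2 q''\<close> for \<open>P = \<kappa> s^g (1 + q)\<close>, the left-hand side is
  \<open>s P'' / (2 P')\<close>; perturbations of size \<open>h\<close> move it by \<open>O(h)\<close> from the pure-power value.\<close>
lemma deriv_ratio_perturbation_le:
  fixes g h A0 A1 A2 :: real
  assumes g: "0 < g" and h: "0 \<le> h" and a0: "\<bar>A0\<bar> \<le> h" and a1: "\<bar>A1\<bar> \<le> h" and a2: "\<bar>A2\<bar> \<le> h"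
    and small: "(g + 1) * h \<le> g / 2"
  shows "(g * (g - 1) * (1 + A0) + 2 * g * A1 + A2) / (2 * (g * (1 + A0) + A1))
    \<le> (g - 1) / 2 + (g + 2) * h / g"
proof -
  define Dn where "Dn = g * (1 + A0) + A1"
  define X where "X = (g + 1) * A1 + A2"
  have "g * (- h) \<le> g * A0" using a0 g by (intro mult_left_mono) auto
  then have Dn: "g / 2 \<le> Dn" using a1 small unfolding Dn_def by (simp add: algebra_simps)
  have "(g + 1) * A1 \<le> (g + 1) * h" using a1 g by (intro mult_left_mono) auto
  then have X: "X \<le> (g + 2) * h" using a2 unfolding X_def by (simp add: algebra_simps)
  have "X / Dn \<le> (g + 2) * h / (g / 2)"
  proof (cases "X \<le> 0")
    case True
    then have "X / Dn \<le> 0" using Dn g by (simp add: divide_nonpos_pos)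
    also have "0 \<le> (g + 2) * h / (g / 2)" using g h by simp
    finally show ?thesis .
  next
    case False
    then have "X / Dn \<le> X / (g / 2)" using Dn g by (intro divide_left_mono) auto
    also have "\<dots> \<le> (g + 2) * h / (g / 2)" using X g by (intro divide_right_mono) auto
    finally show ?thesis .
  qed
  then have "X / Dn / 2 \<le> (g + 2) * h / g" using g by (simp add: field_simps)
  moreover have "g * (g - 1) * (1 + A0) + 2 * g * A1 + A2 = (g - 1) * Dn + X"
    unfolding Dn_def X_def by (simp add: algebra_simps)
  then have "(g * (g - 1) * (1 + A0) + 2 * g * A1 + A2) / (2 * Dn) = (g - 1) / 2 + X / Dn / 2"
    using Dn g by (simp add: field_simps)
  ultimately show ?thesis unfolding Dn_def by simp
qed

lemma deriv_ratio_powr_factor: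
  fixes P q :: "real \<Rightarrow> real"
  assumes S: "open S" "s \<in> S" "\<And>z. z \<in> S \<Longrightarrow> z > 0"
    and eq: "\<And>z. z \<in> S \<Longrightarrow> P z = \<kappa> * z powr \<gamma> * (1 + q z)"
    and \<kappa>: "\<kappa> \<noteq> 0" and dP: "\<And>z. z \<in> S \<Longrightarrow> P differentiable at z"
    and dP2: "deriv P differentiable at s"
  shows "s * deriv (deriv P) s / (2 * deriv P s) =
    (\<gamma> * (\<gamma> - 1) * (1 + q s) + 2 * \<gamma> * (s * deriv q s) + s\<^sup>2 * deriv (deriv q) s)
      / (2 * (\<gamma> * (1 + q s) + s * deriv q s))"
proof -
  have s0: "0 < s" using S by auto
  define E where "E = s powr (\<gamma> - 1)"
  have E: "0 < E" and pe: "s powr (\<gamma> - 2) = E / s" "s powr \<gamma> = E * s"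
    unfolding E_def using s0 powr_diff[of s "\<gamma> - 1" 1] powr_add[of s "\<gamma> - 1" 1] by simp_all
  have "s * deriv (deriv P) s
      = \<kappa> * E * (\<gamma> * (\<gamma> - 1) * (1 + q s) + 2 * \<gamma> * (s * deriv q s) + s\<^sup>2 * deriv (deriv q) s)"
    using deriv2_powr_factor[OF S eq \<kappa> dP dP2] s0 unfolding pe E_def[symmetric]
    by (simp add: field_simps power2_eq_square)
  moreover have "deriv P s = \<kappa> * E * (\<gamma> * (1 + q s) + s * deriv q s)"
    using deriv_powr_factor(2)[OF S eq \<kappa> dP[OF S(2)]] unfolding pe E_def[symmetric]
    by (simp add: algebra_simps)
  ultimately show ?thesis using \<kappa> E by simp
qed

lemma abs_scaled_le_powr:
  fixes s f :: real
  assumes s: "0 < s" and f: "\<bar>f\<bar> \<le> B * s powr (- \<epsilon> - real j)"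
  shows "\<bar>s ^ j * f\<bar> \<le> B * s powr (- \<epsilon>)"
proof -
  have "\<bar>s ^ j * f\<bar> \<le> s ^ j * (B * s powr (- \<epsilon> - real j))"
    using f s by (simp add: abs_mult mult_left_mono)
  also have "\<dots> = B * s powr (- \<epsilon>)"
    using s by (simp add: powr_diff powr_realpow)
  finally show ?thesis .
qed

text \<open>This is where \<open>\<theta>\<^sub>2 = (\<gamma>\<^sub>2 - 1)/2\<close> enters: for a pure power \<open>P = \<kappa> s^\<gamma>\<close> one has
  \<open>d = 1 + s P''/(2P') = 1 + (\<gamma> - 1)/2\<close> exactly.\<close>
lemma dfun_le_at_top:
  assumes hP1: "P1 P" and hP2: "P2 P rho_lo kappa1 gamma1 Clo calP1"
    and hP3: "P3 P rho0 kappa2 gamma2 Chi calP2 eps gamma1" and hrho0: "rho_lo < rho0"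
  shows "\<exists>R0 c. 0 \<le> c \<and> (\<forall>s\<ge>R0. dfun P s \<le> 1 + (gamma2 - 1) / 2 + c * s powr (- eps))"
proof -
  have g: "0 < gamma2" and eps: "0 < eps" and rho0: "0 < rho0"
    using hP2 hP3 hrho0 unfolding P2_def P3_def by auto
  have S: "open {rho0<..}" "\<And>z. z \<in> {rho0<..} \<Longrightarrow> z > 0" using rho0 by auto
  have eq: "\<And>z. z \<in> {rho0<..} \<Longrightarrow> P z = kappa2 * z powr gamma2 * (1 + calP2 z)"
    using hP3 unfolding P3_def by auto
  have bnd: "\<forall>j\<le>4. \<forall>z>rho0. \<bar>(deriv ^^ j) calP2 z\<bar> \<le> Chi * z powr (- eps - real j)"
    using hP3 unfolding P3_def by blast
  have \<kappa>: "kappa2 \<noteq> 0"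
    using powr_factor_coeff_nonzero[OF S(1) _ eq] P1_regularity(3)[OF hP1, of "rho0 + 1"] rho0 by force
  have "\<bar>calP2 (rho0 + 1)\<bar> \<le> Chi * (rho0 + 1) powr (- eps)" using bnd[rule_format, of 0 "rho0 + 1"] by simp
  then have Chi: "0 \<le> Chi" using rho0 order_trans[OF abs_ge_zero] by (force simp: zero_le_mult_iff)
  have "((\<lambda>s::real. s powr (- eps)) \<longlongrightarrow> 0) at_top"
    by (rule tendsto_neg_powr) (use eps in \<open>auto simp: filterlim_ident\<close>)
  then have "((\<lambda>s::real. (gamma2 + 1) * (Chi * s powr (- eps))) \<longlongrightarrow> (gamma2 + 1) * (Chi * 0)) at_top"
    by (intro tendsto_mult tendsto_const)
  then have "eventually (\<lambda>s::real. (gamma2 + 1) * (Chi * s powr (- eps)) < gamma2 / 2) at_top"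
    using g by (intro order_tendstoD) auto
  then obtain S1 where S1: "\<And>s. s \<ge> S1 \<Longrightarrow> (gamma2 + 1) * (Chi * s powr (- eps)) \<le> gamma2 / 2"
    by (force simp: eventually_at_top_linorder)
  have "dfun P s \<le> 1 + (gamma2 - 1) / 2 + (gamma2 + 2) * Chi / gamma2 * s powr (- eps)"
    if s: "max S1 (rho0 + 1) \<le> s" for s
  proof -
    have s0: "0 < s" and sS: "s \<in> {rho0<..}" using s rho0 by auto
    have "dfun P s = 1 + s * deriv (deriv P) s / (2 * deriv P s)" by (rule dfun_eq[OF hP1 hP2 s0])
    also have "\<dots> = 1 + (gamma2 * (gamma2 - 1) * (1 + calP2 s) + 2 * gamma2 * (s * deriv calP2 s)
        + s\<^sup>2 * deriv (deriv calP2) s) / (2 * (gamma2 * (1 + calP2 s) + s * deriv calP2 s))"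
      using deriv_ratio_powr_factor[OF S(1) sS S(2) eq \<kappa> _ P1_regularity(2)[OF hP1 s0]]
        P1_regularity(1)[OF hP1] S(2) by simp
    also have "\<dots> \<le> 1 + ((gamma2 - 1) / 2 + (gamma2 + 2) * (Chi * s powr (- eps)) / gamma2)"
    proof (intro add_left_mono deriv_ratio_perturbation_le)
      show "\<bar>calP2 s\<bar> \<le> Chi * s powr (- eps)" using bnd[rule_format, of 0 s] sS by simp
      show "\<bar>s * deriv calP2 s\<bar> \<le> Chi * s powr (- eps)"
        using abs_scaled_le_powr[OF s0, of _ Chi eps 1] bnd[rule_format, of 1 s] sS by simp
      show "\<bar>s\<^sup>2 * deriv (deriv calP2) s\<bar> \<le> Chi * s powr (- eps)"
        using abs_scaled_le_powr[OF s0, of _ Chi eps 2] bnd[rule_format, of 2 s] sS by (simp add: numeral_2_eq_2)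
    qed (use S1 s Chi g in auto)
    finally show ?thesis by (simp add: mult_ac)
  qed
  then show ?thesis using Chi g by (intro exI[of _ "max S1 (rho0 + 1)"] exI[of _ "(gamma2 + 2) * Chi / gamma2"]) auto
qed

theorem mainTheorem20:
  fixes P calP1 calP2 :: "real \<Rightarrow> real"
    and rho_lo kappa1 gamma1 Clo rho0 kappa2 gamma2 Chi eps :: real
  assumes hP1: "P1 P"
    and hP2: "P2 P rho_lo kappa1 gamma1 Clo calP1"
    and hP3: "P3 P rho0 kappa2 gamma2 Chi calP2 eps gamma1"
    and hrho0: "rho_lo < rho0"
  shows "\<exists>R. \<forall>rho_hi \<ge> R.
    (\<forall>(\<theta>::real) (x::real \<Rightarrow> real) (C::real).
       0 \<le> \<theta> \<and> 0 < C \<and>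
       set_borel_measurable lborel {0..} x \<and>
       (\<forall>t\<ge>0. 0 \<le> x t) \<and>
       (\<forall>t\<ge>0. set_integrable lborel {0..t} x) \<and>
       (\<forall>t\<ge>rho_hi. x t \<le> C * t powr \<theta>
            + (1 / t) * (LINT s:{0..t}|lborel. dfun P s * x s))
       \<longrightarrow> (\<exists>Ct>0. \<forall>t\<ge>rho_hi.
              (\<theta> < (gamma2 - 1) / 2 \<longrightarrow> x t \<le> Ct * t powr ((gamma2 - 1) / 2)) \<and>
              (\<theta> = (gamma2 - 1) / 2 \<longrightarrow> x t \<le> Ct * t powr ((gamma2 - 1) / 2) * ln t) \<and>
              (\<theta> > (gamma2 - 1) / 2 \<longrightarrow> x t \<le> Ct * t powr \<theta>))) \<and>
    (\<forall>(\<theta>::real) (x::real \<Rightarrow> real) (C::real).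
       (gamma2 - 1) / 2 < \<theta> \<and> 0 < C \<and>
       set_borel_measurable lborel {0..} x \<and>
       (\<forall>t\<ge>0. 0 \<le> x t) \<and>
       (\<forall>t\<ge>0. set_integrable lborel {0..t} x) \<and>
       (\<forall>t\<ge>rho_hi. x t \<le> C * t powr \<theta> * ln t
            + (1 / t) * (LINT s:{0..t}|lborel. dfun P s * x s))
       \<longrightarrow> (\<exists>Ct>0. \<forall>t\<ge>rho_hi. x t \<le> Ct * t powr \<theta> * ln t))"
proof -
  obtain R0 c where c: "0 \<le> c"
    and dle: "\<And>s. s \<ge> R0 \<Longrightarrow> dfun P s \<le> 1 + (gamma2 - 1) / 2 + c * s powr (- eps)"
    using dfun_le_at_top[OF hP1 hP2 hP3 hrho0] by blast
  have a: "0 \<le> (gamma2 - 1) / 2" and eps: "0 < eps" using hP3 unfolding P3_def by auto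
  show ?thesis
    apply (rule exI[of _ "max R0 (exp 1)"], intro allI impI conjI; elim conjE)
    subgoal for R \<theta> x C
      using dle by (intro volterra_growth_powr_source[OF eps c a, where d="dfun P"]) auto
    subgoal for R \<theta> x C
      using dle by (intro volterra_growth_log_source[OF eps c a, where d="dfun P"]) auto
    done
qed

end
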